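(* Let $n\ge1$ and $\nu$ a permutation of $[n]$. Then: (1) $\mathrm{WZ}_\nu^{2n}(x)=x$ for all $x\in S_n$. (2) For $1\le j\le n$ let $f_j(x)=1$ if $j\in\{x_1,\dots,x_n\}$ and $0$ otherwise. Then $f_j$ is homomesic for $\mathrm{WZ}_\nu$ on $S_n$ with average $1/2$ along every orbit; hence any real linear combination of the $f_j$ is homomesic.
   Context: $S_n$ is the set of integer $n$-tuples $x=(x_1,\dots,x_n)$ such that for some $0\le k\le n$, $x_1=\dots=x_k=0$ and $1\le x_{k+1}<\dots<x_n\le n$. Winching with zeros on index $i$, $\mathrm{WZ}_i:S_n\to S_n$, changes only the $i$-th coordinate, to: $x_i+1$ if $x_i+1<x_{i+1}$ (where $x_{n+1}:=n+1$); otherwise $x_{i-1}+1$ if $i>1$ and $x_{i-1}>0$; otherwise $0$. $\mathrm{WZ}_\nu=\mathrm{WZ}_{\nu(n)}\circ\cdots\circ\mathrm{WZ}_{\nu(1)}$. A function on a finite set with a permutation $\tau$ is homomesic if its average over every $\tau$-orbit is the same constant. *)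

theory Defs
  imports Complex_Main "HOL-Combinatorics.Permutations"
begin

text \<open>Tuples x = (x_1,...,x_n) are represented as functions nat => nat with
  coordinates at indices 1..n and value 0 at all other indices.\<close>

definition S :: "nat \<Rightarrow> (nat \<Rightarrow> nat) set" where
  "S n = {x. (\<forall>i. i \<notin> {1..n} \<longrightarrow> x i = 0) \<and>
             (\<exists>k\<le>n. (\<forall>i\<in>{1..k}. x i = 0) \<and>
                    (\<forall>i\<in>{k+1..n}. 1 \<le> x i \<and> x i \<le> n) \<and>
                    (\<forall>i j. k + 1 \<le> i \<longrightarrow> i < j \<longrightarrow> j \<le> n \<longrightarrow> x i < x j))}"

text \<open>Winching with zeros on index i (with the convention x_{n+1} = n+1).\<close>
definition WZ :: "nat \<Rightarrow> nat \<Rightarrow> (nat \<Rightarrow> nat) \<Rightarrow> (nat \<Rightarrow> nat)" where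
  "WZ n i x = x(i :=
     (let nxt = (if i = n then n + 1 else x (i + 1)) in
      if x i + 1 < nxt then x i + 1
      else if i > 1 \<and> x (i - 1) > 0 then x (i - 1) + 1
      else 0))"

text \<open>WZ_nu = WZ_{nu(n)} o ... o WZ_{nu(1)}: first apply WZ_{nu(1)}, last WZ_{nu(n)}.\<close>
definition WZperm :: "nat \<Rightarrow> (nat \<Rightarrow> nat) \<Rightarrow> (nat \<Rightarrow> nat) \<Rightarrow> (nat \<Rightarrow> nat)" where
  "WZperm n \<nu> x = foldl (\<lambda>y k. WZ n (\<nu> k) y) x [1..<n+1]"

definition orbit_of :: "('a \<Rightarrow> 'a) \<Rightarrow> 'a \<Rightarrow> 'a set" where
  "orbit_of \<tau> x = {(\<tau> ^^ k) x | k. True}"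

definition orbit_avg :: "('a \<Rightarrow> 'a) \<Rightarrow> ('a \<Rightarrow> real) \<Rightarrow> 'a \<Rightarrow> real" where
  "orbit_avg \<tau> f x = (\<Sum>y\<in>orbit_of \<tau> x. f y) / real (card (orbit_of \<tau> x))"

definition homomesic_with :: "'a set \<Rightarrow> ('a \<Rightarrow> 'a) \<Rightarrow> ('a \<Rightarrow> real) \<Rightarrow> real \<Rightarrow> bool" where
  "homomesic_with A \<tau> f c \<longleftrightarrow> (\<forall>x\<in>A. orbit_avg \<tau> f x = c)"

definition homomesic :: "'a set \<Rightarrow> ('a \<Rightarrow> 'a) \<Rightarrow> ('a \<Rightarrow> real) \<Rightarrow> bool" where
  "homomesic A \<tau> f \<longleftrightarrow> (\<exists>c. homomesic_with A \<tau> f c)"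

definition fj :: "nat \<Rightarrow> nat \<Rightarrow> (nat \<Rightarrow> nat) \<Rightarrow> real" where
  "fj n j x = (if j \<in> x ` {1..n} then 1 else 0)"

end

theory Submission
  imports Defs "HOL-Combinatorics.Orbits"
begin

text \<open>
  Membership in \<open>S\<^sub>n\<close> is a condition on neighbouring coordinates only, so every \<open>WZ\<^sub>i\<close> is a
  bijection of the finite set \<open>S\<^sub>n\<close>, and \<open>WZ\<^sub>i\<close>, \<open>WZ\<^sub>j\<close> commute when \<open>|i - j| \<ge> 2\<close>.

  For the descending order \<open>n, n - 1, \<dots>, 1\<close>, one application of \<open>WZ\<^sub>\<nu>\<close> acts on the set \<open>A\<close> of
  nonzero entries of \<open>x\<close> (which determines \<open>x\<close>) by shifting every element below \<open>n\<close> up by one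
  and adding \<open>1\<close> exactly when \<open>n \<notin> A\<close>. After \<open>n\<close> steps this produces the complement of \<open>A\<close>;
  hence \<open>2n\<close> steps return to \<open>x\<close>, and every \<open>j\<close> lies in exactly \<open>n\<close> of the \<open>2n\<close> sets met.

  Any other order is reduced to the descending one by commuting letters and by moving the first
  letter \<open>b\<close> of the word to its end. The latter conjugates \<open>WZ\<^sub>\<nu>\<close> by \<open>WZ\<^sub>b\<close>; this keeps the period,
  and it keeps the sums of the \<open>f\<^sub>j\<close> over \<open>2n\<close> steps, because along an orbit \<open>WZ\<^sub>b\<close> merely moves
  the \<open>b\<close>-th coordinate one step forward in time. Finally, the average over an orbit equals the
  average over any period.
\<close>

subsection \<open>The set \<open>S\<^sub>n\<close>\<close>

lemma S_outside: "x \<in> S n \<Longrightarrow> i \<notin> {1..n} \<Longrightarrow> x i = 0"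
  by (auto simp: S_def)

lemma S_le: "x \<in> S n \<Longrightarrow> x i \<le> n"
proof -
  assume "x \<in> S n"
  then obtain k where "\<forall>i\<in>{1..k}. x i = 0" "\<forall>i\<in>{k+1..n}. x i \<le> n"
    and "\<forall>i. i \<notin> {1..n} \<longrightarrow> x i = 0"
    by (auto simp: S_def)
  then show ?thesis
    by (cases "i \<in> {1..n}"; cases "i \<le> k") auto
qed

lemma S_strict_mono: "x \<in> S n \<Longrightarrow> 0 < x a \<Longrightarrow> a < b \<Longrightarrow> b \<le> n \<Longrightarrow> x a < x b"
proof -
  assume "x \<in> S n" "0 < x a" "a < b" "b \<le> n"
  moreover obtain k where "\<forall>i\<in>{1..k}. x i = 0"
    "\<forall>i j. k + 1 \<le> i \<longrightarrow> i < j \<longrightarrow> j \<le> n \<longrightarrow> x i < x j"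
    "\<forall>i. i \<notin> {1..n} \<longrightarrow> x i = 0"
    using \<open>x \<in> S n\<close> by (auto simp: S_def)
  ultimately show ?thesis
    by (metis Suc_eq_plus1 atLeastAtMost_iff less_le_trans less_numeral_extra(3)
        not_less_eq_eq order_less_imp_le)
qed

lemma S_pos_inj: "x \<in> S n \<Longrightarrow> 0 < x b \<Longrightarrow> i \<le> n \<Longrightarrow> b \<le> n \<Longrightarrow> x i = x b \<Longrightarrow> i = b"
  by (metis S_strict_mono linorder_neqE_nat less_irrefl)

lemma finite_S: "finite (S n)"
proof (rule finite_subset)
  show "S n \<subseteq> {f. \<forall>i. (i \<in> {1..n} \<longrightarrow> f i \<in> {0..n}) \<and> (i \<notin> {1..n} \<longrightarrow> f i = 0)}"
    using S_le S_outside by auto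
  show "finite {f. \<forall>i. (i \<in> {1..n} \<longrightarrow> f i \<in> {0..n}) \<and> (i \<notin> {1..n} \<longrightarrow> f i = (0::nat))}"
    by (rule finite_set_of_finite_funs) auto
qed

definition S_local :: "nat \<Rightarrow> (nat \<Rightarrow> nat) \<Rightarrow> bool" where
  "S_local n x \<longleftrightarrow> (\<forall>i. i \<notin> {1..n} \<longrightarrow> x i = 0) \<and>
     (\<forall>i\<in>{1..n}. x i = 0 \<or> x i < (if i = n then n + 1 else x (Suc i)))"

lemma S_local_if_S: "x \<in> S n \<Longrightarrow> S_local n x"
  unfolding S_local_def
proof (intro conjI ballI allI impI)
  fix i assume "x \<in> S n" "i \<notin> {1..n}"
  then show "x i = 0" by (rule S_outside)
next
  fix i assume "x \<in> S n" "i \<in> {1..n}"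
  then show "x i = 0 \<or> x i < (if i = n then n + 1 else x (Suc i))"
    using S_le[of x n i] S_strict_mono[of x n i "Suc i"] by (cases "i = n") auto
qed

lemma S_local_left: "S_local n x \<Longrightarrow> i \<le> n \<Longrightarrow> x (i - 1) = 0 \<or> x (i - 1) < x i"
proof (cases "1 < i")
  case True
  assume "S_local n x" "i \<le> n"
  moreover have "i - 1 \<in> {1..n}" "i - 1 \<noteq> n" "Suc (i - 1) = i" using True \<open>i \<le> n\<close> by auto
  ultimately show ?thesis unfolding S_local_def by metis
qed (auto simp: S_local_def)

lemma S_local_up:
  "S_local n x \<Longrightarrow> 0 < x i \<Longrightarrow> 1 \<le> i \<Longrightarrow> i + d \<le> n \<Longrightarrow> x i + d \<le> x (i + d)"
proof (induction d)
  case (Suc d)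
  then have "x (i + d) = 0 \<or> x (i + d) < x (Suc (i + d))"
    unfolding S_local_def by (auto dest!: bspec[of _ _ "i + d"])
  with Suc show ?case by auto
qed simp

lemma S_if_S_local: "S_local n x \<Longrightarrow> x \<in> S n"
proof -
  assume L: "S_local n x"
  have out: "\<forall>i. i \<notin> {1..n} \<longrightarrow> x i = 0" using L by (simp add: S_local_def)
  have up: "x i < x j" if "0 < x i" "i < j" "j \<le> n" for i j
  proof -
    have "1 \<le> i" using out that by (metis atLeastAtMost_iff le_trans less_imp_le_nat
          not_gr_zero not_less_eq_eq Suc_eq_plus1 One_nat_def)
    then show ?thesis using S_local_up[OF L that(1) \<open>1 \<le> i\<close>, of "j - i"] that by auto
  qed
  have top: "x n \<le> n"
    using L out unfolding S_local_def by (cases "n \<in> {1..n}") fastforce+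
  show ?thesis
  proof (cases "\<exists>i. i \<in> {1..n} \<and> 0 < x i")
    case False
    then show ?thesis unfolding S_def using out by (auto intro!: exI[of _ n])
  next
    case True
    define m where "m = (LEAST i. i \<in> {1..n} \<and> 0 < x i)"
    have m: "m \<in> {1..n}" "0 < x m"
      using LeastI_ex[OF True] unfolding m_def[symmetric] by auto
    have below: "x i = 0" if "1 \<le> i" "i < m" for i
      using not_less_Least[of i "\<lambda>i. i \<in> {1..n} \<and> 0 < x i"] that m unfolding m_def by auto
    have above: "0 < x i \<and> x i \<le> n" if "m \<le> i" "i \<le> n" for i
      using up[of m i] up[of i n] m that top by (cases "m = i"; cases "i = n") auto
    show ?thesis unfolding S_def
      using m below above up out by (auto simp: Suc_le_eq intro!: exI[of _ "m - 1"])
  qed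
qed

lemma S_iff_S_local: "x \<in> S n \<longleftrightarrow> S_local n x"
  using S_local_if_S S_if_S_local by blast

subsection \<open>Single winches\<close>

lemma WZ_apply_other: "j \<noteq> i \<Longrightarrow> WZ n i x j = x j"
  by (simp add: WZ_def)

lemma WZ_apply_self:
  "WZ n i x i = (if x i + 1 < (if i = n then n + 1 else x (i + 1)) then x i + 1
      else if 1 < i \<and> 0 < x (i - 1) then x (i - 1) + 1 else 0)"
  by (simp add: WZ_def Let_def)

lemma WZ_in_S:
  assumes x: "x \<in> S n" and i: "i \<in> {1..n}"
  shows "WZ n i x \<in> S n"
proof -
  have L: "S_local n x" using x S_iff_S_local by blast
  have at_i: "x i = 0 \<or> x i < (if i = n then n + 1 else x (Suc i))"
    using L i unfolding S_local_def by auto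
  have left: "x (i - 1) = 0 \<or> x (i - 1) < x i"
    using S_local_left[OF L] i by auto
  have "S_local n (WZ n i x)"
    unfolding S_local_def
  proof (intro conjI allI impI ballI)
    fix j assume j: "j \<notin> {1..n}"
    then have "j \<noteq> i" using i by auto
    then show "WZ n i x j = 0" using j L by (simp add: WZ_apply_other S_local_def)
  next
    fix j assume j: "j \<in> {1..n}"
    consider "j = i" | "Suc j = i" | "j \<noteq> i" "Suc j \<noteq> i" by blast
    then show "WZ n i x j = 0 \<or> WZ n i x j < (if j = n then n + 1 else WZ n i x (Suc j))"
    proof cases
      case 1
      then show ?thesis using at_i left i
        by (auto simp: WZ_apply_self WZ_apply_other)
    next
      case 2
      then have "x j = 0 \<or> x j < x i" using L j i unfolding S_local_def by auto
      then show ?thesis using 2 at_i i j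
        by (auto simp: WZ_apply_self WZ_apply_other)
    next
      case 3
      then show ?thesis using L j by (auto simp: WZ_apply_other S_local_def)
    qed
  qed
  then show ?thesis using S_iff_S_local by blast
qed

lemma winch_rule_inj:
  fixes v v' r l :: nat
  assumes "v = 0 \<or> v < r" "v' = 0 \<or> v' < r" "l = 0 \<or> l < v" "l = 0 \<or> l < v'"
    and "(if v + 1 < r then v + 1 else if P \<and> 0 < l then l + 1 else 0)
       = (if v' + 1 < r then v' + 1 else if P \<and> 0 < l then l + 1 else 0)"
  shows "v = v'"
  using assms by (auto split: if_splits)

lemma WZ_inj_on: assumes i: "i \<in> {1..n}" shows "inj_on (WZ n i) (S n)"
proof (rule inj_onI)
  fix x x' assume "x \<in> S n" "x' \<in> S n" and eq: "WZ n i x = WZ n i x'"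
  then have L: "S_local n x" "S_local n x'" using S_iff_S_local by blast+
  have other: "x j = x' j" if "j \<noteq> i" for j
    using eq WZ_apply_other[OF that, of n _] by metis
  have "i - 1 \<noteq> i" "i + 1 \<noteq> i" using i by auto
  then have left_eq: "x (i - 1) = x' (i - 1)" and right_eq: "x (i + 1) = x' (i + 1)"
    using other by blast+
  have "x i = x' i"
  proof (rule winch_rule_inj[where r = "if i = n then n + 1 else x (i + 1)"
        and l = "x (i - 1)" and P = "1 < i"])
    show "x i = 0 \<or> x i < (if i = n then n + 1 else x (i + 1))"
      "x' i = 0 \<or> x' i < (if i = n then n + 1 else x (i + 1))"
      using L i right_eq unfolding S_local_def by auto
    show "x (i - 1) = 0 \<or> x (i - 1) < x i" "x (i - 1) = 0 \<or> x (i - 1) < x' i"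
      using S_local_left[OF L(1), of i] S_local_left[OF L(2), of i] i left_eq by auto
    have "WZ n i x i = WZ n i x' i" using eq by simp
    then show "(if x i + 1 < (if i = n then n + 1 else x (i + 1)) then x i + 1
          else if 1 < i \<and> 0 < x (i - 1) then x (i - 1) + 1 else 0)
        = (if x' i + 1 < (if i = n then n + 1 else x (i + 1)) then x' i + 1
          else if 1 < i \<and> 0 < x (i - 1) then x (i - 1) + 1 else 0)"
      unfolding WZ_apply_self left_eq[symmetric] right_eq[symmetric] .
  qed
  then show "x = x'" using other by (metis ext)
qed

lemma bij_betw_WZ: assumes "i \<in> {1..n}" shows "bij_betw (WZ n i) (S n) (S n)"
proof -
  have "WZ n i ` S n = S n"
    by (rule endo_inj_surj[OF finite_S]) (use WZ_in_S WZ_inj_on assms in auto)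
  then show ?thesis using WZ_inj_on[OF assms] by (simp add: bij_betw_def)
qed

lemma WZ_commute:
  assumes "a + 2 \<le> b \<or> b + 2 \<le> a"
  shows "WZ n a (WZ n b x) = WZ n b (WZ n a x)"
proof -
  have d: "a \<noteq> b" "a \<noteq> b + 1" "b \<noteq> a + 1" "a \<noteq> b - 1" "b \<noteq> a - 1" using assms by auto
  then have e: "WZ n b x (a - 1) = x (a - 1)" "WZ n b x a = x a" "WZ n b x (a + 1) = x (a + 1)"
    "WZ n a x (b - 1) = x (b - 1)" "WZ n a x b = x b" "WZ n a x (b + 1) = x (b + 1)"
    by (simp_all add: WZ_apply_other)
  show ?thesis
  proof (rule ext)
    fix j
    show "WZ n a (WZ n b x) j = WZ n b (WZ n a x) j"
      unfolding WZ_def[of n a "WZ n b x"] WZ_def[of n b "WZ n a x"] e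
      using d by (simp add: WZ_def)
  qed
qed

definition winch_word :: "nat \<Rightarrow> nat list \<Rightarrow> (nat \<Rightarrow> nat) \<Rightarrow> (nat \<Rightarrow> nat)" where
  "winch_word n w x = foldl (\<lambda>y k. WZ n k y) x w"

lemma winch_word_Nil [simp]: "winch_word n [] x = x"
  and winch_word_Cons [simp]: "winch_word n (b # w) x = winch_word n w (WZ n b x)"
  and winch_word_append [simp]: "winch_word n (u @ w) x = winch_word n w (winch_word n u x)"
  by (simp_all add: winch_word_def)

lemma WZperm_eq_winch_word: "WZperm n \<nu> = winch_word n (map \<nu> [1..<n + 1])"
  by (rule ext) (simp add: WZperm_def winch_word_def foldl_map)

lemma winch_word_in_S: "set w \<subseteq> {1..n} \<Longrightarrow> x \<in> S n \<Longrightarrow> winch_word n w x \<in> S n"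
  by (induction w arbitrary: x) (simp_all add: WZ_in_S)

lemma winch_word_apply_other: "b \<notin> set w \<Longrightarrow> winch_word n w x b = x b"
  by (induction w arbitrary: x) (auto simp: WZ_apply_other)

lemma winch_word_commute:
  "\<forall>c\<in>set w. c + 2 \<le> b \<or> b + 2 \<le> c \<Longrightarrow> winch_word n (b # w) x = winch_word n (w @ [b]) x"
proof (induction w arbitrary: x)
  case (Cons c w)
  have "winch_word n (b # c # w) x = winch_word n (b # w) (WZ n c x)"
    using Cons.prems by (simp add: WZ_commute)
  also have "\<dots> = winch_word n (w @ [b]) (WZ n c x)"
    using Cons by simp
  finally show ?case by simp
qed simp

subsection \<open>Periodic winching maps with balanced indicator sums\<close>

definition balanced_2n_periodic :: "nat \<Rightarrow> ((nat \<Rightarrow> nat) \<Rightarrow> (nat \<Rightarrow> nat)) \<Rightarrow> bool" where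
  "balanced_2n_periodic n f \<longleftrightarrow> (\<forall>x\<in>S n. f x \<in> S n) \<and> (\<forall>x\<in>S n. (f ^^ (2 * n)) x = x) \<and>
     (\<forall>x\<in>S n. \<forall>j\<in>{1..n}. (\<Sum>t<2 * n. fj n j ((f ^^ t) x)) = real n)"

lemma funpow_semiconj:
  assumes "\<And>z. g (w z) = w (f z)"
  shows "(g ^^ t) (w z) = w ((f ^^ t) z)"
  by (induction t) (simp_all add: assms)

lemma sum_lessThan_Suc_periodic:
  fixes h :: "nat \<Rightarrow> 'a::cancel_comm_monoid_add"
  assumes "h N = h 0"
  shows "(\<Sum>t<N. h (Suc t)) = (\<Sum>t<N. h t)"
proof -
  have "h 0 + (\<Sum>t<N. h (Suc t)) = (\<Sum>t<N. h t) + h N"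
    by (simp only: sum.lessThan_Suc_shift[symmetric] sum.lessThan_Suc)
  then show ?thesis using assms by (simp add: add.commute)
qed

lemma fj_split_coord:
  assumes y: "y \<in> S n" and b: "b \<in> {1..n}" and j: "1 \<le> j"
  shows "fj n j y = of_bool (y b = j) + of_bool (\<exists>i\<in>{1..n} - {b}. y i = j)"
proof (cases "y b = j")
  case True
  then have "\<not> (\<exists>i\<in>{1..n} - {b}. y i = j)" using S_pos_inj[OF y, of b] b j by fastforce
  then show ?thesis using True b by (auto simp: fj_def)
qed (use b in \<open>auto simp: fj_def\<close>)

text \<open>If \<open>f\<close> itself winches coordinate \<open>b\<close>, then winching \<open>b\<close> along an \<open>f\<close>-orbit only
  advances the \<open>b\<close>-th coordinate by one time step, which a full period does not notice.\<close>

lemma sum_fj_WZ_along_period: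
  assumes b: "b \<in> {1..n}" and j: "1 \<le> j"
    and orbit: "\<And>t. (f ^^ t) z \<in> S n" and period: "(f ^^ N) z = z"
    and f_at_b: "\<And>y. f y b = WZ n b y b"
  shows "(\<Sum>t<N. fj n j (WZ n b ((f ^^ t) z))) = (\<Sum>t<N. fj n j ((f ^^ t) z))"
proof -
  define other where "other y = (of_bool (\<exists>i\<in>{1..n} - {b}. y i = j) :: real)" for y
  define at_b where "at_b t = (of_bool ((f ^^ t) z b = j) :: real)" for t
  have "fj n j (WZ n b ((f ^^ t) z)) = at_b (Suc t) + other ((f ^^ t) z)" for t
  proof -
    have "\<forall>i\<in>{1..n} - {b}. WZ n b ((f ^^ t) z) i = (f ^^ t) z i"
      by (simp add: WZ_apply_other)
    then have "(\<exists>i\<in>{1..n} - {b}. WZ n b ((f ^^ t) z) i = j) \<longleftrightarrow> (\<exists>i\<in>{1..n} - {b}. (f ^^ t) z i = j)"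
      by auto
    then have "other (WZ n b ((f ^^ t) z)) = other ((f ^^ t) z)"
      unfolding other_def by simp
    moreover have "WZ n b ((f ^^ t) z) b = (f ^^ Suc t) z b" by (simp add: f_at_b)
    ultimately show ?thesis
      using fj_split_coord[OF WZ_in_S[OF orbit b] b j] unfolding other_def at_b_def by simp
  qed
  then have "(\<Sum>t<N. fj n j (WZ n b ((f ^^ t) z))) = (\<Sum>t<N. at_b (Suc t)) + (\<Sum>t<N. other ((f ^^ t) z))"
    by (simp add: sum.distrib)
  also have "(\<Sum>t<N. at_b (Suc t)) = (\<Sum>t<N. at_b t)"
    by (rule sum_lessThan_Suc_periodic) (simp add: at_b_def period)
  also have "(\<Sum>t<N. at_b t) + (\<Sum>t<N. other ((f ^^ t) z)) = (\<Sum>t<N. fj n j ((f ^^ t) z))"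
    using fj_split_coord[OF orbit b j] by (simp add: at_b_def other_def sum.distrib)
  finally show ?thesis .
qed

text \<open>Moving the first letter \<open>b\<close> to the end conjugates the winching map by \<open>WZ n b\<close>.\<close>

lemma balanced_2n_periodic_rotate:
  assumes b: "b \<in> {1..n}" and bw: "b \<notin> set w" and w: "set w \<subseteq> {1..n}"
    and bal: "balanced_2n_periodic n (winch_word n (b # w))"
  shows "balanced_2n_periodic n (winch_word n (w @ [b]))"
proof -
  define f where "f = winch_word n (b # w)"
  define g where "g = winch_word n (w @ [b])"
  have conj: "(g ^^ t) (WZ n b z) = WZ n b ((f ^^ t) z)" for t z
    by (rule funpow_semiconj[of g "WZ n b" f]) (simp add: f_def g_def)
  have f_S: "\<forall>x\<in>S n. f x \<in> S n" and per: "\<forall>x\<in>S n. (f ^^ (2 * n)) x = x"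
    and sums: "\<forall>x\<in>S n. \<forall>j\<in>{1..n}. (\<Sum>t<2 * n. fj n j ((f ^^ t) x)) = real n"
    using bal unfolding balanced_2n_periodic_def f_def by auto
  have orbit: "(f ^^ t) z \<in> S n" if "z \<in> S n" for t z
    using that f_S by (induction t) auto
  have preimage: "\<exists>z\<in>S n. x = WZ n b z" if "x \<in> S n" for x
    using bij_betw_WZ[OF b] that by (auto simp: bij_betw_def)
  have "g x \<in> S n" if "x \<in> S n" for x
    using that b w by (simp add: g_def winch_word_in_S WZ_in_S)
  moreover have "(g ^^ (2 * n)) x = x" if "x \<in> S n" for x
    using preimage[OF that] conj per by auto
  moreover have "(\<Sum>t<2 * n. fj n j ((g ^^ t) x)) = real n"
    if x: "x \<in> S n" and j: "j \<in> {1..n}" for x j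
  proof -
    obtain z where z: "z \<in> S n" "x = WZ n b z" using preimage[OF x] by blast
    have "(\<Sum>t<2 * n. fj n j ((g ^^ t) x)) = (\<Sum>t<2 * n. fj n j (WZ n b ((f ^^ t) z)))"
      by (simp add: z(2) conj)
    also have "\<dots> = (\<Sum>t<2 * n. fj n j ((f ^^ t) z))"
      using j orbit[OF z(1)] per z(1) bw
      by (intro sum_fj_WZ_along_period[OF b]) (auto simp: f_def winch_word_apply_other)
    finally show ?thesis using sums z(1) j by simp
  qed
  ultimately show ?thesis unfolding balanced_2n_periodic_def g_def by blast
qed

subsection \<open>The descending winching order\<close>

definition winch_desc :: "nat \<Rightarrow> (nat \<Rightarrow> nat) \<Rightarrow> nat \<Rightarrow> nat" where
  "winch_desc n x i = (if i \<in> {1..n} then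
     (if x n = n then (if 1 < i \<and> 0 < x (i - 1) then x (i - 1) + 1 else 0)
      else (if 0 < x i then x i + 1 else if i = n \<or> 0 < x (Suc i) then 1 else 0)) else 0)"

text \<open>When \<open>WZ n m\<close> is applied, the coordinates right of \<open>m\<close> have already been winched
  and those left of \<open>m\<close> not yet.\<close>

lemma WZ_desc_step:
  assumes x: "x \<in> S n" and m: "m \<in> {1..n}"
    and y: "y m = x m" "y (m - 1) = x (m - 1)" "m < n \<Longrightarrow> y (m + 1) = winch_desc n x (m + 1)"
  shows "WZ n m y m = winch_desc n x m"
proof (cases "x n = n")
  case True
  show ?thesis
  proof (cases "m = n")
    case False
    then have "y (m + 1) = (if 0 < x m then x m + 1 else 0)"
      using y(3) True m by (simp add: winch_desc_def)
    then show ?thesis using y True m False by (simp add: WZ_apply_self winch_desc_def)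
  qed (use y True m in \<open>simp add: WZ_apply_self winch_desc_def\<close>)
next
  case False
  then have xn: "x n < n" using S_le[OF x, of n] by simp
  show ?thesis
  proof (cases "m = n")
    case False
    then have mn: "m < n" using m by auto
    have y_right: "y (m + 1) = (if 0 < x (m + 1) then x (m + 1) + 1
        else if m + 1 = n \<or> 0 < x (Suc (m + 1)) then 1 else 0)"
      using y(3)[OF mn] xn mn by (simp add: winch_desc_def)
    have desc: "winch_desc n x m = (if 0 < x m then x m + 1 else if 0 < x (Suc m) then 1 else 0)"
      using mn m xn by (simp add: winch_desc_def)
    have mono_right: "0 < x m \<Longrightarrow> x m < x (m + 1)"
      using S_strict_mono[OF x, of m "m + 1"] mn by simp
    have mono_left: "0 < x (m - 1) \<Longrightarrow> 0 < x m"
      using S_strict_mono[OF x, of "m - 1" m] S_outside[OF x, of "m - 1"] m by (cases "1 < m") auto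
    show ?thesis
    proof (cases "0 < x m")
      case True
      then show ?thesis using y y_right desc mono_right mn by (simp add: WZ_apply_self)
    next
      case False
      then have "x m = 0" "x (m - 1) = 0" using mono_left by auto
      then show ?thesis
        using y y_right desc mn by (cases "0 < x (m + 1)") (auto simp: WZ_apply_self)
    qed
  qed (use y xn m in \<open>auto simp: WZ_apply_self winch_desc_def\<close>)
qed

lemma winch_word_rev_suffix:
  assumes x: "x \<in> S n"
  shows "d \<le> n \<Longrightarrow> winch_word n (rev [n + 1 - d..<n + 1]) x
    = (\<lambda>j. if n + 1 - d \<le> j \<and> j \<le> n then winch_desc n x j else x j)"
proof (induction d)
  case (Suc d)
  define m where "m = n - d"
  have m: "1 \<le> m" "m \<le> n" "n + 1 - Suc d = m" "n + 1 - d = m + 1"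
    using Suc.prems by (auto simp: m_def)
  define y where "y = (\<lambda>j. if m + 1 \<le> j \<and> j \<le> n then winch_desc n x j else x j)"
  have IH: "winch_word n (rev [m + 1..<n + 1]) x = y"
    using Suc.IH Suc.prems unfolding m(4) y_def by simp
  have "[m..<n + 1] = m # [m + 1..<n + 1]" using m by (simp add: upt_conv_Cons)
  then have "winch_word n (rev [n + 1 - Suc d..<n + 1]) x = WZ n m y"
    unfolding m(3) by (simp only: rev.simps winch_word_append IH winch_word_Cons winch_word_Nil)
  also have "\<dots> = (\<lambda>j. if m \<le> j \<and> j \<le> n then winch_desc n x j else x j)"
  proof (rule ext)
    fix j
    show "WZ n m y j = (if m \<le> j \<and> j \<le> n then winch_desc n x j else x j)"
    proof (cases "j = m")
      case True
      have "WZ n m y m = winch_desc n x m"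
        by (rule WZ_desc_step[OF x]) (use m in \<open>auto simp: y_def\<close>)
      then show ?thesis using True m by simp
    qed (auto simp: WZ_apply_other y_def)
  qed
  finally show ?case unfolding m(3) .
qed (auto simp: fun_eq_iff)

lemma winch_word_rev_upt: "x \<in> S n \<Longrightarrow> winch_word n (rev [1..<n + 1]) x = winch_desc n x"
  using winch_word_rev_suffix[of x n n] S_outside[of x n]
  by (auto simp: fun_eq_iff winch_desc_def)

definition vals :: "nat \<Rightarrow> (nat \<Rightarrow> nat) \<Rightarrow> nat set" where
  "vals n x = x ` {1..n} - {0}"

definition twisted_shift :: "nat \<Rightarrow> nat set \<Rightarrow> nat set" where
  "twisted_shift n B = {j. (2 \<le> j \<and> j \<le> n \<and> j - 1 \<in> B) \<or> (j = 1 \<and> n \<notin> B)}"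

lemma fj_eq_vals: "1 \<le> j \<Longrightarrow> fj n j x = of_bool (j \<in> vals n x)"
  by (auto simp: fj_def vals_def)

lemma vals_subset: "x \<in> S n \<Longrightarrow> vals n x \<subseteq> {1..n}"
  using S_le by (fastforce simp: vals_def)

lemma vals_agree_above:
  assumes x: "x \<in> S n" and x': "x' \<in> S n" and eq: "vals n x = vals n x'"
    and i: "i \<in> {1..n}" and above: "\<forall>j. i < j \<and> j \<le> n \<longrightarrow> x j = x' j"
  shows "\<not> x i < x' i"
proof
  assume lt: "x i < x' i"
  then have "x' i \<in> vals n x" unfolding eq using i by (auto simp: vals_def)
  then obtain l where l: "l \<in> {1..n}" "x l = x' i" by (auto simp: vals_def)
  have "\<not> l \<le> i"
    using S_strict_mono[OF x, of l i] l lt i by (cases "l = i") auto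
  then show False
    using above S_pos_inj[OF x', of i l] l lt i by auto
qed

lemma vals_inj_on: "inj_on (vals n) (S n)"
proof (rule inj_onI, rule ccontr)
  fix x x' assume x: "x \<in> S n" and x': "x' \<in> S n" and eq: "vals n x = vals n x'" and "x \<noteq> x'"
  define D where "D = {i\<in>{1..n}. x i \<noteq> x' i}"
  obtain k where k: "x k \<noteq> x' k" using \<open>x \<noteq> x'\<close> by (meson ext)
  then have "k \<in> {1..n}" using S_outside[OF x, of k] S_outside[OF x', of k] by fastforce
  with k have "k \<in> D" by (simp add: D_def)
  then have "D \<noteq> {}" by blast
  moreover have "finite D" by (simp add: D_def)
  ultimately have max: "Max D \<in> D" "\<forall>j\<in>D. j \<le> Max D" by simp_all
  then have i: "Max D \<in> {1..n}" "x (Max D) \<noteq> x' (Max D)" by (auto simp: D_def)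
  have above: "x j = x' j" if "Max D < j \<and> j \<le> n" for j
  proof (rule ccontr)
    assume "x j \<noteq> x' j"
    then have "j \<in> D" using that i by (auto simp: D_def)
    then show False using max that by auto
  qed
  have "\<not> x (Max D) < x' (Max D)"
    by (rule vals_agree_above[OF x x' eq i(1)]) (use above in blast)
  moreover have "\<not> x' (Max D) < x (Max D)"
    by (rule vals_agree_above[OF x' x eq[symmetric] i(1)]) (use above in force)
  ultimately show False using i(2) by linarith
qed

lemma vals_winch_desc_top:
  assumes x: "x \<in> S n" and top: "x n = n" and n: "1 \<le> n"
  shows "vals n (winch_desc n x) = twisted_shift n (vals n x)"
proof -
  have y: "winch_desc n x i = (if i \<in> {1..n} \<and> 1 < i \<and> 0 < x (i - 1) then x (i - 1) + 1 else 0)" for i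
    using top by (simp add: winch_desc_def)
  have "n \<in> x ` {1..n}" using top n by (metis atLeastAtMost_iff image_eqI order_refl)
  then have "n \<in> vals n x" using n by (simp add: vals_def)
  moreover have "v \<in> vals n (winch_desc n x) \<longleftrightarrow> 2 \<le> v \<and> v \<le> n \<and> v - 1 \<in> vals n x" for v
  proof
    assume "v \<in> vals n (winch_desc n x)"
    then obtain i where i: "i \<in> {1..n}" "1 < i" "0 < x (i - 1)" "v = x (i - 1) + 1"
      unfolding vals_def y by (auto split: if_splits)
    moreover have "x (i - 1) < x n" using S_strict_mono[OF x, of "i - 1" n] i by auto
    ultimately show "2 \<le> v \<and> v \<le> n \<and> v - 1 \<in> vals n x"
      using top by (force simp: vals_def)
  next
    assume v: "2 \<le> v \<and> v \<le> n \<and> v - 1 \<in> vals n x"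
    then obtain l where l: "l \<in> {1..n}" "x l = v - 1" "0 < x l" by (auto simp: vals_def)
    then have "l \<noteq> n" using v top by auto
    then have "Suc l \<in> {1..n}" "winch_desc n x (Suc l) = v" using l v y[of "Suc l"] by auto
    then show "v \<in> vals n (winch_desc n x)" using v by (force simp: vals_def)
  qed
  ultimately show ?thesis unfolding twisted_shift_def by blast
qed

lemma vals_winch_desc_not_top:
  assumes x: "x \<in> S n" and not_top: "x n < n" and n: "1 \<le> n"
  shows "vals n (winch_desc n x) = twisted_shift n (vals n x)"
proof -
  have y: "winch_desc n x i = (if i \<in> {1..n} then (if 0 < x i then x i + 1
      else if i = n \<or> 0 < x (Suc i) then 1 else 0) else 0)" for i
    using not_top by (simp add: winch_desc_def)
  have below_n: "x i < n" if "i \<in> {1..n}" for i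
  proof (cases "i = n \<or> x i = 0")
    case False
    then show ?thesis using S_strict_mono[OF x, of i n] that not_top by auto
  qed (use not_top n in auto)
  then have n_out: "n \<notin> vals n x" unfolding vals_def by (metis DiffE imageE less_irrefl)
  have one_in: "1 \<in> vals n (winch_desc n x)"
  proof -
    obtain k where k: "k \<le> n" "\<forall>i\<in>{1..k}. x i = 0" "\<forall>i\<in>{k+1..n}. 0 < x i"
      using x by (fastforce simp: S_def)
    have "k \<noteq> 0"
    proof
      assume "k = 0"
      then have "x 1 + (n - 1) \<le> x n"
        using S_local_up[OF S_local_if_S[OF x], of 1 "n - 1"] k n by simp
      moreover have "0 < x 1" using k \<open>k = 0\<close> n by simp
      ultimately show False using not_top by linarith
    qed
    moreover have "k = n \<or> 0 < x (Suc k)" using k by (cases "k = n") auto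
    ultimately have "k \<in> {1..n}" "winch_desc n x k = 1" using k y[of k] by auto
    then show ?thesis by (force simp: vals_def)
  qed
  have shifted: "v \<in> vals n (winch_desc n x) \<longleftrightarrow> 2 \<le> v \<and> v \<le> n \<and> v - 1 \<in> vals n x"
    if "v \<noteq> 1" for v
  proof
    assume "v \<in> vals n (winch_desc n x)"
    then obtain i where i: "i \<in> {1..n}" "winch_desc n x i = v" "0 < v" by (auto simp: vals_def)
    then have "0 < x i" "v = x i + 1" using y[of i] \<open>v \<noteq> 1\<close> by (auto split: if_splits)
    then show "2 \<le> v \<and> v \<le> n \<and> v - 1 \<in> vals n x"
      using i below_n[OF i(1)] by (auto simp: vals_def)
  next
    assume v: "2 \<le> v \<and> v \<le> n \<and> v - 1 \<in> vals n x"
    then obtain l where l: "l \<in> {1..n}" "x l = v - 1" "0 < x l" by (auto simp: vals_def)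
    then have "winch_desc n x l = v" using y[of l] v by auto
    then show "v \<in> vals n (winch_desc n x)" using l v by (force simp: vals_def)
  qed
  show ?thesis
  proof (intro set_eqI)
    fix v
    show "v \<in> vals n (winch_desc n x) \<longleftrightarrow> v \<in> twisted_shift n (vals n x)"
      using n_out one_in shifted by (cases "v = 1") (simp_all add: twisted_shift_def)
  qed
qed

lemma vals_winch_desc:
  assumes "x \<in> S n" and "1 \<le> n"
  shows "vals n (winch_desc n x) = twisted_shift n (vals n x)"
proof (cases "x n = n")
  case False
  then have "x n < n" using S_le[OF assms(1), of n] by simp
  then show ?thesis using vals_winch_desc_not_top assms by blast
qed (use vals_winch_desc_top assms in blast)

lemma twisted_shift_funpow:
  assumes B: "B \<subseteq> {1..n}" and t: "t \<le> n"
  shows "j \<in> (twisted_shift n ^^ t) B \<longleftrightarrow>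
    1 \<le> j \<and> j \<le> n \<and> (if t < j then j - t \<in> B else n - t + j \<notin> B)"
  using t
proof (induction t arbitrary: j)
  case (Suc t)
  have IH: "j \<in> (twisted_shift n ^^ t) B \<longleftrightarrow>
      1 \<le> j \<and> j \<le> n \<and> (if t < j then j - t \<in> B else n - t + j \<notin> B)" for j
    using Suc by simp
  have step: "j \<in> (twisted_shift n ^^ Suc t) B \<longleftrightarrow>
      (2 \<le> j \<and> j \<le> n \<and> j - 1 \<in> (twisted_shift n ^^ t) B) \<or> (j = 1 \<and> n \<notin> (twisted_shift n ^^ t) B)"
    by (simp add: twisted_shift_def)
  consider "j = 0" | "j = 1" | "2 \<le> j" by linarith
  then show ?case
  proof cases
    case 2
    have "n - Suc t + 1 = n - t" using Suc.prems by simp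
    then show ?thesis using 2 Suc.prems unfolding step IH by simp
  next
    case 3
    have "j - 1 - t = j - Suc t" "n - t + (j - 1) = n - Suc t + j" using 3 Suc.prems by auto
    then show ?thesis using 3 unfolding step IH by auto
  qed (simp add: twisted_shift_def)
qed (use B in auto)

lemma twisted_shift_funpow_n: "B \<subseteq> {1..n} \<Longrightarrow> (twisted_shift n ^^ n) B = {1..n} - B"
  using twisted_shift_funpow[of B n n] by auto

lemma twisted_shift_funpow_subset: "1 \<le> n \<Longrightarrow> B \<subseteq> {1..n} \<Longrightarrow> (twisted_shift n ^^ t) B \<subseteq> {1..n}"
  by (induction t) (auto simp: twisted_shift_def)

lemma sum_lessThan_add_nat:
  fixes h :: "nat \<Rightarrow> 'a::comm_monoid_add"
  shows "(\<Sum>t<a + b. h t) = (\<Sum>t<a. h t) + (\<Sum>t<b. h (a + t))"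
  by (induction b) (simp_all add: add.assoc)

lemma balanced_2n_periodic_rev_upt:
  assumes n: "1 \<le> n"
  shows "balanced_2n_periodic n (winch_word n (rev [1..<n + 1]))"
proof -
  define f where "f = winch_word n (rev [1..<n + 1])"
  have f_S: "f x \<in> S n" if "x \<in> S n" for x
    unfolding f_def using that by (intro winch_word_in_S) auto
  have vals_f: "vals n (f x) = twisted_shift n (vals n x)" if "x \<in> S n" for x
    unfolding f_def winch_word_rev_upt[OF that] using that n by (rule vals_winch_desc)
  have iterate: "(f ^^ t) x \<in> S n \<and> vals n ((f ^^ t) x) = (twisted_shift n ^^ t) (vals n x)"
    if "x \<in> S n" for t x
    using that by (induction t) (simp_all add: f_S vals_f)
  have complement: "vals n ((f ^^ (n + t)) x) = {1..n} - vals n ((f ^^ t) x)"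
    if "x \<in> S n" for t x
  proof -
    have "vals n ((f ^^ (n + t)) x) = (twisted_shift n ^^ n) ((twisted_shift n ^^ t) (vals n x))"
      using iterate[OF that, of "n + t"] by (simp add: funpow_add)
    also have "\<dots> = {1..n} - (twisted_shift n ^^ t) (vals n x)"
      by (rule twisted_shift_funpow_n[OF twisted_shift_funpow_subset[OF n vals_subset[OF that]]])
    finally show ?thesis using iterate[OF that, of t] by simp
  qed
  have "(f ^^ (2 * n)) x = x" if "x \<in> S n" for x
  proof (rule inj_onD[OF vals_inj_on])
    have "vals n ((f ^^ (n + n)) x) = vals n x"
      using complement[OF that, of n] complement[OF that, of 0] vals_subset[OF that] by auto
    then show "vals n ((f ^^ (2 * n)) x) = vals n x" by (simp add: mult_2)
  qed (use iterate that in auto)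
  moreover have "(\<Sum>t<2 * n. fj n j ((f ^^ t) x)) = real n" if "x \<in> S n" "j \<in> {1..n}" for x j
  proof -
    define h where "h t = (of_bool (j \<in> vals n ((f ^^ t) x)) :: real)" for t
    have "fj n j ((f ^^ t) x) = h t" for t using that by (simp add: fj_eq_vals h_def)
    moreover have "h t + h (n + t) = 1" for t
      using complement[OF that(1), of t] that(2) by (simp add: h_def)
    ultimately show ?thesis
      by (simp add: mult_2 sum_lessThan_add_nat flip: sum.distrib)
  qed
  ultimately show ?thesis unfolding balanced_2n_periodic_def f_def[symmetric] using f_S by blast
qed

subsection \<open>Reduction of an arbitrary order to the descending one\<close>

fun precedes :: "'a list \<Rightarrow> 'a \<Rightarrow> 'a \<Rightarrow> bool" where
  "precedes [] a b = False"
| "precedes (x # xs) a b = ((x = a \<and> b \<in> set xs) \<or> precedes xs a b)"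

lemma precedes_append:
  "precedes (xs @ ys) a b \<longleftrightarrow> precedes xs a b \<or> precedes ys a b \<or> (a \<in> set xs \<and> b \<in> set ys)"
  by (induction xs) auto

lemma precedes_in_set: "precedes xs a b \<Longrightarrow> a \<in> set xs \<and> b \<in> set xs"
  by (induction xs) auto

lemma precedes_total: "a \<in> set xs \<Longrightarrow> b \<in> set xs \<Longrightarrow> a \<noteq> b \<Longrightarrow> precedes xs a b \<or> precedes xs b a"
  by (induction xs) auto

lemma precedes_asym: "distinct xs \<Longrightarrow> precedes xs a b \<Longrightarrow> \<not> precedes xs b a"
  by (induction xs) (auto dest: precedes_in_set)

lemma precedes_trans: "distinct xs \<Longrightarrow> precedes xs a b \<Longrightarrow> precedes xs b c \<Longrightarrow> precedes xs a c"
  by (induction xs) (auto dest: precedes_in_set)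

lemma sorted_wrt_iff_precedes: "sorted_wrt P xs \<longleftrightarrow> (\<forall>a b. precedes xs a b \<longrightarrow> P a b)"
  by (induction xs) auto

definition ascents :: "nat \<Rightarrow> nat list \<Rightarrow> nat set" where
  "ascents n w = {i. 1 \<le> i \<and> i < n \<and> precedes w i (Suc i)}"

definition ascent_weight :: "nat \<Rightarrow> nat list \<Rightarrow> nat" where
  "ascent_weight n w = (\<Sum>i\<in>ascents n w. n - i)"

lemma finite_ascents: "finite (ascents n w)"
  by (rule finite_subset[of _ "{..<n}"]) (auto simp: ascents_def)

lemma ascents_empty_imp_rev_upt:
  assumes d: "distinct w" and s: "set w = {1..n}" and no_asc: "ascents n w = {}"
  shows "w = rev [1..<n + 1]"
proof -
  have step: "precedes w (Suc i) i" if "1 \<le> i" "i < n" for i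
  proof -
    have "\<not> precedes w i (Suc i)" using no_asc that by (auto simp: ascents_def)
    moreover have "i \<in> set w" "Suc i \<in> set w" using s that by auto
    ultimately show ?thesis using precedes_total[of i w "Suc i"] by simp
  qed
  have down: "precedes w (a + Suc k) a" if "1 \<le> a" "a + Suc k \<le> n" for a k
    using that
  proof (induction k)
    case (Suc k)
    have "precedes w (a + Suc (Suc k)) (a + Suc k)" using step[of "a + Suc k"] Suc.prems by simp
    moreover have "precedes w (a + Suc k) a" using Suc by simp
    ultimately show ?case using precedes_trans[OF d] by blast
  qed (simp add: step)
  have "sorted_wrt (>) w"
    unfolding sorted_wrt_iff_precedes
  proof (intro allI impI)
    fix a b assume ab: "precedes w a b"
    have "a \<in> {1..n}" "b \<in> {1..n}" using precedes_in_set[OF ab] s by auto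
    show "b < a"
    proof (rule ccontr)
      assume "\<not> b < a"
      moreover have "a \<noteq> b" using precedes_asym[OF d ab] ab by auto
      ultimately have "precedes w (a + Suc (b - a - 1)) a"
        using down[of a "b - a - 1"] \<open>a \<in> {1..n}\<close> \<open>b \<in> {1..n}\<close> by auto
      then have "precedes w b a" using \<open>\<not> b < a\<close> \<open>a \<noteq> b\<close> by (simp add: Suc_diff_Suc)
      then show False using precedes_asym[OF d ab] by simp
    qed
  qed
  then have "sorted_wrt (<) (rev w)" by (simp add: sorted_wrt_rev)
  moreover have "sorted_wrt (<) [1..<n + 1]" by (rule sorted_wrt_upt)
  moreover have "set [1..<n + 1] = set (rev w)"
    using s by (simp only: set_rev set_upt Suc_eq_plus1[symmetric] atLeastLessThanSuc_atLeastAtMost)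
  ultimately have "[1..<n + 1] = rev w" by (rule strict_sorted_equal)
  then show ?thesis by simp
qed

lemma ascent_weight_move_front_less:
  assumes d: "distinct (p @ b # q)" and i: "i \<in> ascents n (p @ b # q)" and b: "b = Suc i"
  shows "ascent_weight n (b # p @ q) < ascent_weight n (p @ b # q)"
proof -
  define D where "D = ascents n (p @ b # q)"
  have iD: "i \<in> D" and i_lt: "i < n" using i by (auto simp: D_def ascents_def)
  have sub: "ascents n (b # p @ q) \<subseteq> insert b (D - {i})"
  proof
    fix k assume k: "k \<in> ascents n (b # p @ q)"
    have "b \<notin> set (p @ q)" using d by auto
    then have "k \<noteq> i" using k b by (auto simp: ascents_def dest: precedes_in_set)
    moreover have "k \<in> D" if "k \<noteq> b" "Suc k \<noteq> b"
      using k that by (auto simp: D_def ascents_def precedes_append)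
    ultimately show "k \<in> insert b (D - {i})" using b by auto
  qed
  have "ascent_weight n (b # p @ q) \<le> (\<Sum>k\<in>insert b (D - {i}). n - k)"
    unfolding ascent_weight_def by (rule sum_mono2) (use sub finite_ascents D_def in auto)
  also have "\<dots> \<le> (n - b) + (\<Sum>k\<in>D - {i}. n - k)"
    using finite_ascents[of n "p @ b # q"] by (simp add: D_def sum.insert_if)
  also have "\<dots> < (n - i) + (\<Sum>k\<in>D - {i}. n - k)"
    using b i_lt by simp
  also have "\<dots> = ascent_weight n (p @ b # q)"
    unfolding ascent_weight_def D_def[symmetric]
    by (rule sum.remove[symmetric]) (simp_all add: D_def finite_ascents iD[unfolded D_def])
  finally show ?thesis .
qed

lemma top_ascent_commutes:
  assumes d: "distinct w" and s: "set w = {1..n}"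
    and i: "i \<in> ascents n w" and top: "\<forall>k\<in>ascents n w. k \<le> i"
    and w: "w = p @ Suc i # q"
  shows "\<forall>c\<in>set q. c + 2 \<le> Suc i \<or> Suc i + 2 \<le> c"
proof
  fix c assume c: "c \<in> set q"
  have before: "precedes w (Suc i) c" using c w by (simp add: precedes_append)
  have "c \<noteq> Suc i" using d w c by auto
  moreover have "c \<noteq> i"
    using before i precedes_asym[OF d] by (auto simp: ascents_def)
  moreover have "c \<noteq> Suc (Suc i)"
  proof
    assume "c = Suc (Suc i)"
    moreover have "c \<in> set w" using c w by simp
    ultimately have "Suc i \<in> ascents n w" using before s by (auto simp: ascents_def)
    then show False using top by auto
  qed
  ultimately show "c + 2 \<le> Suc i \<or> Suc i + 2 \<le> c" by auto
qed

text \<open>Induction on the weight of the ascents: with \<open>i\<close> the largest ascent, the letter \<open>i + 1\<close>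
  commutes with everything after it, and moving it to the front trades ascent \<open>i\<close> for at most
  the lighter ascent \<open>i + 1\<close>.\<close>

lemma balanced_2n_periodic_winch_word:
  assumes n: "1 \<le> n"
  shows "distinct w \<Longrightarrow> set w = {1..n} \<Longrightarrow> balanced_2n_periodic n (winch_word n w)"
proof (induction "ascent_weight n w" arbitrary: w rule: less_induct)
  case less
  show ?case
  proof (cases "ascents n w = {}")
    case True
    then show ?thesis
      using ascents_empty_imp_rev_upt less.prems balanced_2n_periodic_rev_upt[OF n] by simp
  next
    case False
    define i where "i = Max (ascents n w)"
    have i: "i \<in> ascents n w" "\<forall>k\<in>ascents n w. k \<le> i"
      using False finite_ascents by (simp_all add: i_def)
    then have "Suc i \<in> set w" using less.prems by (auto simp: ascents_def)
    then obtain p q where w: "w = p @ Suc i # q" by (meson split_list)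
    have "balanced_2n_periodic n (winch_word n (Suc i # p @ q))"
      using less.hyps ascent_weight_move_front_less less.prems i w by fastforce
    then have "balanced_2n_periodic n (winch_word n ((p @ q) @ [Suc i]))"
      using less.prems w by (intro balanced_2n_periodic_rotate) auto
    moreover have "winch_word n w = winch_word n ((p @ q) @ [Suc i])"
      using winch_word_commute[OF top_ascent_commutes[OF less.prems i w]] w
      by (simp add: fun_eq_iff)
    ultimately show ?thesis by simp
  qed
qed

lemma balanced_2n_periodic_WZperm:
  assumes "1 \<le> n" and "\<nu> permutes {1..n}"
  shows "balanced_2n_periodic n (WZperm n \<nu>)"
proof -
  have upt: "set [1..<n + 1] = {1..n}" by auto
  have "distinct (map \<nu> [1..<n + 1])"
    using permutes_inj_on[OF assms(2)] by (simp only: distinct_map upt) simp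
  moreover have "set (map \<nu> [1..<n + 1]) = {1..n}"
    using permutes_image[OF assms(2)] by (simp only: set_map upt)
  ultimately show ?thesis
    unfolding WZperm_eq_winch_word by (rule balanced_2n_periodic_winch_word[OF assms(1)])
qed

subsection \<open>Orbit averages\<close>

lemma sum_funpow_mult_period:
  fixes g :: "'a \<Rightarrow> 'b::comm_semiring_1"
  assumes "(c ^^ d) x = x"
  shows "(\<Sum>t<q * d. g ((c ^^ t) x)) = of_nat q * (\<Sum>t<d. g ((c ^^ t) x))"
proof -
  have shift: "(c ^^ (t + m * d)) x = (c ^^ t) x" for t m
    by (metis assms funpow_mod_eq mod_mult_self1 mult.commute)
  have "(\<Sum>t<q * d. g ((c ^^ t) x)) = (\<Sum>m<q. \<Sum>t\<in>{m * d..<m * d + d}. g ((c ^^ t) x))"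
    by (rule sum.nat_group[symmetric])
  also have "\<dots> = (\<Sum>m<q. \<Sum>t<d. g ((c ^^ t) x))"
  proof (rule sum.cong[OF refl])
    fix m
    have "(\<Sum>t\<in>{0 + m * d..<d + m * d}. g ((c ^^ t) x)) = (\<Sum>t\<in>{0..<d}. g ((c ^^ (t + m * d)) x))"
      by (rule sum.shift_bounds_nat_ivl)
    then show "(\<Sum>t\<in>{m * d..<m * d + d}. g ((c ^^ t) x)) = (\<Sum>t<d. g ((c ^^ t) x))"
      by (simp add: add.commute atLeast0LessThan shift)
  qed
  finally show ?thesis by simp
qed

lemma orbit_avg_eq_period_avg:
  assumes period: "(c ^^ N) x = x" and N: "0 < N"
  shows "orbit_avg c f x = (\<Sum>t<N. f ((c ^^ t) x)) / real N"
proof -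
  define d where "d = funpow_dist1 c x x"
  have self: "x \<in> orbit c x" using period N unfolding orbit_altdef by (auto intro!: exI[of _ N])
  have orbit: "orbit_of c x = (\<lambda>t. (c ^^ t) x) ` {..<d}"
    using orbit_conv_funpow_dist1[OF self] orbit_altdef_self_in[OF self]
    by (simp add: orbit_of_def d_def atLeast0LessThan)
  have inj: "inj_on (\<lambda>t. (c ^^ t) x) {..<d}"
    using inj_on_funpow_dist1[OF self] by (simp add: d_def atLeast0LessThan)
  have d_period: "(c ^^ d) x = x" using funpow_dist1_prop[OF self] by (simp add: d_def)
  have "N mod d = 0"
  proof (rule ccontr)
    assume "N mod d \<noteq> 0"
    moreover have "(c ^^ (N mod d)) x = x" using funpow_mod_eq[OF d_period] period by simp
    ultimately show False using funpow_dist1_least[of "N mod d" c x x] by (simp add: d_def)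
  qed
  then obtain q where q: "N = q * d" by (metis mod_eq_0_iff_dvd dvd_def mult.commute)
  then have "0 < q" using N by (cases q) auto
  have "orbit_avg c f x = (\<Sum>t<d. f ((c ^^ t) x)) / real d"
    unfolding orbit_avg_def orbit using inj by (simp add: sum.reindex card_image)
  also have "\<dots> = (real q * (\<Sum>t<d. f ((c ^^ t) x))) / (real q * real d)"
    using \<open>0 < q\<close> by simp
  also have "\<dots> = (\<Sum>t<N. f ((c ^^ t) x)) / real N"
    using sum_funpow_mult_period[OF d_period, of f q] q by simp
  finally show ?thesis .
qed

lemma orbit_avg_lincomb:
  "orbit_avg c (\<lambda>y. \<Sum>j\<in>J. a j * f j y) x = (\<Sum>j\<in>J. a j * orbit_avg c (f j) x)"
  unfolding orbit_avg_def
  by (simp add: sum.swap[of _ J] sum_distrib_left sum_divide_distrib mult.assoc)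

theorem mainTheorem9:
  fixes n :: nat and \<nu> :: "nat \<Rightarrow> nat"
  assumes "n \<ge> 1" and "\<nu> permutes {1..n}"
  shows "(\<forall>x\<in>S n. (WZperm n \<nu> ^^ (2 * n)) x = x)
    \<and> (\<forall>j\<in>{1..n}. homomesic_with (S n) (WZperm n \<nu>) (fj n j) (1/2))
    \<and> (\<forall>a :: nat \<Rightarrow> real. homomesic (S n) (WZperm n \<nu>) (\<lambda>x. \<Sum>j=1..n. a j * fj n j x))"
proof -
  have period: "\<forall>x\<in>S n. (WZperm n \<nu> ^^ (2 * n)) x = x"
    and sums: "\<forall>x\<in>S n. \<forall>j\<in>{1..n}. (\<Sum>t<2 * n. fj n j ((WZperm n \<nu> ^^ t) x)) = real n"
    using balanced_2n_periodic_WZperm[OF assms] by (auto simp: balanced_2n_periodic_def)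
  have half: "orbit_avg (WZperm n \<nu>) (fj n j) x = 1 / 2" if "x \<in> S n" "j \<in> {1..n}" for x j
    using orbit_avg_eq_period_avg[where c = "WZperm n \<nu>" and N = "2 * n" and x = x] period sums that assms(1) by simp
  have "homomesic_with (S n) (WZperm n \<nu>) (\<lambda>x. \<Sum>j=1..n. a j * fj n j x) (\<Sum>j=1..n. a j / 2)"
    for a :: "nat \<Rightarrow> real"
    unfolding homomesic_with_def orbit_avg_lincomb using half by (auto intro!: sum.cong)
  then show ?thesis
    using period half by (auto simp: homomesic_def homomesic_with_def)
qed
end
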